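(* Let $A$ be a non-empty set, $1\le p<\infty$, and let $P\colon\ell_p(A)\to\ell_p(A)$ be a contractive positive projection with constant diagonal $\alpha>0$. Then $n=1/\alpha\in\mathbb{N}$, and there exists a partition $\{A_i\}_i$ of $A$ into sets of size $n$ such that \[P\Big(\sum_{a\in A}\lambda_a e_a\Big)=\alpha\sum_i\Big(\sum_{a\in A_i}\lambda_a\Big)\chi_{A_i}\] whenever $\sum_{a\in A}|\lambda_a|^p<\infty$. In particular, if $A$ is countable, there is an enumeration of $A$ such that the matrix of $P$ is block diagonal with every diagonal block equal to $\alpha\mathbf{1}_n$ and all off-diagonal blocks equal to $\mathbf{0}_n$.
   Context: $\chi_B$ denotes the characteristic function of $B\subseteq A$ and $e_a=\chi_{\{a\}}$. $\mathbf{0}_n$ is the $n\times n$ zero block and $\mathbf{1}_n$ the $n\times n$ block of ones. Contractive means $\|P\|\le 1$; positive projection means linear, $P^2=P$, $P\ge0$. For a Dedekind complete vector lattice $X$, $\mathcal{L}^r(X)$ is the Dedekind complete vector lattice of regular operators; the center (operators $T$ with $\pm T\le\lambda\,\mathrm{id}_X$ for some $\lambda$) is a projection band in it, with band projection $\mathcal{D}$; $T$ has constant diagonal $\alpha$ if $\mathcal{D}(T)=\alpha\,\mathrm{id}_X$. For $X=\ell_p(A)$ this means $(Pe_a)(a)=\alpha$ for all $a\in A$. *)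

theory Defs
  imports "HOL-Analysis.Analysis"
begin

text \<open>The real sequence space ell_p(A), with the index set A given as a type 'a
  (types are non-empty, so A is non-empty).\<close>
definition lp :: "real \<Rightarrow> ('a \<Rightarrow> real) set" where
  "lp p = {f. (\<lambda>a. \<bar>f a\<bar> powr p) summable_on UNIV}"

definition lp_norm :: "real \<Rightarrow> ('a \<Rightarrow> real) \<Rightarrow> real" where
  "lp_norm p f = (\<Sum>\<^sub>\<infinity>a. \<bar>f a\<bar> powr p) powr (1 / p)"

definition unit_vec :: "'a \<Rightarrow> 'a \<Rightarrow> real" where
  "unit_vec a = indicator {a}"

definition lp_linear_op :: "real \<Rightarrow> (('a \<Rightarrow> real) \<Rightarrow> ('a \<Rightarrow> real)) \<Rightarrow> bool" where
  "lp_linear_op p P \<longleftrightarrow>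
     (\<forall>f\<in>lp p. P f \<in> lp p) \<and>
     (\<forall>f\<in>lp p. \<forall>g\<in>lp p. P (\<lambda>a. f a + g a) = (\<lambda>a. P f a + P g a)) \<and>
     (\<forall>f\<in>lp p. \<forall>c::real. P (\<lambda>a. c * f a) = (\<lambda>a. c * P f a))"

definition contractive_positive_projection ::
    "real \<Rightarrow> (('a \<Rightarrow> real) \<Rightarrow> ('a \<Rightarrow> real)) \<Rightarrow> bool" where
  "contractive_positive_projection p P \<longleftrightarrow>
     lp_linear_op p P \<and>
     (\<forall>f\<in>lp p. P (P f) = P f) \<and>
     (\<forall>f\<in>lp p. (\<forall>a. f a \<ge> 0) \<longrightarrow> (\<forall>a. P f a \<ge> 0)) \<and>
     (\<forall>f\<in>lp p. lp_norm p (P f) \<le> lp_norm p f)"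

definition constant_diagonal ::
    "(('a \<Rightarrow> real) \<Rightarrow> ('a \<Rightarrow> real)) \<Rightarrow> real \<Rightarrow> bool" where
  "constant_diagonal P \<alpha> \<longleftrightarrow> (\<forall>a. P (unit_vec a) a = \<alpha>)"

end

theory Submission
  imports Defs
begin

(* Write column a = P e_a, so that (P f)(b) is the sum of f(a) * column a b.  Positivity and
   idempotence give column a c * column c b <= column a b, so "column a c > 0" is a preorder.
   The positive part of a fixed point of P is again fixed (contractivity and strict monotonicity
   of the norm), and testing this on the fixed points column a - l * column c shows that the
   preorder is symmetric and that linked columns are proportional.  Its classes (blocks) are
   therefore finite, and P (column a) = column a gives alpha * |block| = 1.  Finally, since
   P (column a - t e_a) = (1 - t) column a, contractivity makes
   t |-> ||column a - t e_a||^p - ||(1 - t) column a||^p nonnegative with a zero at t = 0; the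
   vanishing derivative gives sum_d (column a d)^p = alpha^(p-1) for every a.  Two proportional
   columns with the same such sum coincide, which forces every entry inside a block to be alpha. *)

lemma lp_finite_support:
  assumes "finite {a. f a \<noteq> 0}"
  shows "f \<in> lp p"
proof -
  have "(\<lambda>a. \<bar>f a\<bar> powr p) summable_on {a. f a \<noteq> 0} \<longleftrightarrow>
        (\<lambda>a. \<bar>f a\<bar> powr p) summable_on UNIV"
    by (rule summable_on_cong_neutral) auto
  with assms show ?thesis
    unfolding lp_def by simp
qed

lemma unit_vec_in_lp: "unit_vec b \<in> lp p"
  by (rule lp_finite_support) (simp add: unit_vec_def indicator_def)

lemma lp_abs_le:
  assumes "f \<in> lp p" "\<And>a. \<bar>g a\<bar> \<le> \<bar>f a\<bar>" "0 \<le> p"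
  shows "g \<in> lp p"
  using assms unfolding lp_def mem_Collect_eq
  by (elim summable_on_comparison_test) (auto intro: powr_mono2)

lemma lp_cmult:
  assumes "f \<in> lp p"
  shows "(\<lambda>a. c * f a) \<in> lp p"
proof -
  have "(\<lambda>a. \<bar>c\<bar> powr p * \<bar>f a\<bar> powr p) summable_on UNIV"
    using assms unfolding lp_def by (simp add: summable_on_cmult_right)
  then show ?thesis
    unfolding lp_def by (simp add: abs_mult powr_mult)
qed

lemma lp_add:
  assumes "f \<in> lp p" "g \<in> lp p" "0 \<le> p"
  shows "(\<lambda>a. f a + g a) \<in> lp p"
proof -
  have "\<bar>f a + g a\<bar> powr p \<le> 2 powr p * (\<bar>f a\<bar> powr p + \<bar>g a\<bar> powr p)" for a
  proof -
    have "\<bar>f a + g a\<bar> powr p \<le> (2 * max \<bar>f a\<bar> \<bar>g a\<bar>) powr p"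
      using assms(3) by (intro powr_mono2) auto
    also have "\<dots> = 2 powr p * max \<bar>f a\<bar> \<bar>g a\<bar> powr p"
      by (simp add: powr_mult)
    also have "\<dots> \<le> 2 powr p * (\<bar>f a\<bar> powr p + \<bar>g a\<bar> powr p)"
      by (simp add: max_def)
    finally show ?thesis .
  qed
  moreover have "(\<lambda>a. 2 powr p * (\<bar>f a\<bar> powr p + \<bar>g a\<bar> powr p)) summable_on UNIV"
    using assms unfolding lp_def by (intro summable_on_cmult_right summable_on_add) auto
  ultimately show ?thesis
    unfolding lp_def by (auto intro: summable_on_comparison_test)
qed

lemma lp_sum:
  assumes "finite F" "\<And>b. b \<in> F \<Longrightarrow> g b \<in> lp p" "0 \<le> p"
  shows "(\<lambda>a. \<Sum>b\<in>F. g b a) \<in> lp p"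
  using assms by (induction F rule: finite_induct) (auto intro: lp_add lp_finite_support)

lemma sum_unit_vec:
  assumes "finite F"
  shows "(\<lambda>a. \<Sum>b\<in>F. f b * unit_vec b a) = (\<lambda>a. if a \<in> F then f a else 0)"
proof -
  have "f b * unit_vec b a = (if b = a then f b else 0)" for a b
    by (simp add: unit_vec_def)
  with assms show ?thesis
    by simp
qed

lemma lp_norm_strict_mono:
  assumes "g \<in> lp p" "h \<in> lp p" "0 < p" "\<And>a. 0 \<le> h a" "\<And>a. h a \<le> g a" "h \<noteq> g"
  shows "lp_norm p h < lp_norm p g"
proof -
  obtain d where "h d \<noteq> g d"
    using assms(6) by auto
  with assms(5) have "h d < g d"
    by (simp add: order_less_le)
  have "(\<Sum>\<^sub>\<infinity>a. \<bar>h a\<bar> powr p) < (\<Sum>\<^sub>\<infinity>a. \<bar>g a\<bar> powr p)"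
  proof (rule has_sum_strict_mono_neutral)
    show "((\<lambda>a. \<bar>h a\<bar> powr p) has_sum (\<Sum>\<^sub>\<infinity>a. \<bar>h a\<bar> powr p)) UNIV"
         "((\<lambda>a. \<bar>g a\<bar> powr p) has_sum (\<Sum>\<^sub>\<infinity>a. \<bar>g a\<bar> powr p)) UNIV"
      using assms(1,2) unfolding lp_def by auto
    show "\<bar>h a\<bar> powr p \<le> \<bar>g a\<bar> powr p" for a
      using assms(3) assms(4,5)[of a] by (intro powr_mono2) auto
    show "if d \<in> UNIV then \<bar>h d\<bar> powr p < \<bar>g d\<bar> powr p else 0 < \<bar>g d\<bar> powr p"
      using \<open>h d < g d\<close> assms(3,4) by (auto intro: powr_less_mono2)
  qed auto
  then show ?thesis
    unfolding lp_norm_def using assms(3) by (intro powr_less_mono2) (auto intro: infsum_nonneg)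
qed

lemma abs_le_lp_norm:
  assumes "f \<in> lp p" "0 < p"
  shows "\<bar>f b\<bar> \<le> lp_norm p f"
proof -
  have "\<bar>f b\<bar> powr p \<le> (\<Sum>\<^sub>\<infinity>a. \<bar>f a\<bar> powr p)"
    using finite_sum_le_infsum[of "\<lambda>a. \<bar>f a\<bar> powr p" UNIV "{b}"] assms(1)
    unfolding lp_def by auto
  then have "(\<bar>f b\<bar> powr p) powr (1 / p) \<le> (\<Sum>\<^sub>\<infinity>a. \<bar>f a\<bar> powr p) powr (1 / p)"
    using assms(2) by (intro powr_mono2) auto
  with assms(2) show ?thesis
    unfolding lp_norm_def by (simp add: powr_powr)
qed

lemma lp_norm_finite_support:
  assumes "finite S" "\<And>a. a \<notin> S \<Longrightarrow> f a = 0"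
  shows "lp_norm p f = (\<Sum>a\<in>S. \<bar>f a\<bar> powr p) powr (1 / p)"
proof -
  have "(\<Sum>\<^sub>\<infinity>a. \<bar>f a\<bar> powr p) = (\<Sum>\<^sub>\<infinity>a\<in>S. \<bar>f a\<bar> powr p)"
    by (rule infsum_cong_neutral) (use assms in auto)
  with assms(1) show ?thesis
    unfolding lp_norm_def by simp
qed

lemma lp_tail_small:
  assumes "f \<in> lp p" "0 < p" "finite B" "0 < \<epsilon>"
  obtains F where "finite F" "B \<subseteq> F" "lp_norm p (\<lambda>a. if a \<in> F then 0 else f a) \<le> \<epsilon>"
proof -
  define g where "g a = \<bar>f a\<bar> powr p" for a
  have g: "g summable_on UNIV"
    using assms(1) unfolding lp_def g_def by simp
  obtain F0 where "finite F0" and F0: "dist (sum g F0) (infsum g UNIV) \<le> \<epsilon> powr p"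
    using infsum_finite_approximation[OF g, of "\<epsilon> powr p"] assms(4) by auto
  define F where "F = F0 \<union> B"
  have "finite F"
    using \<open>finite F0\<close> assms(3) by (simp add: F_def)
  have "infsum g UNIV = infsum g (F \<union> - F)"
    by simp
  also have "\<dots> = sum g F + infsum g (- F)"
    using \<open>finite F\<close> g by (subst infsum_Un_disjoint) (auto intro: summable_on_subset)
  finally have "infsum g (- F) \<le> \<epsilon> powr p"
    using F0 sum_mono2[OF \<open>finite F\<close>, of F0 g] by (auto simp: F_def g_def dist_real_def)
  moreover have "(\<Sum>\<^sub>\<infinity>a. \<bar>if a \<in> F then 0 else f a\<bar> powr p) = infsum g (- F)"
    by (rule infsum_cong_neutral) (auto simp: g_def)
  ultimately have "lp_norm p (\<lambda>a. if a \<in> F then 0 else f a) \<le> (\<epsilon> powr p) powr (1 / p)"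
    unfolding lp_norm_def using assms(2) by (intro powr_mono2) (auto intro: infsum_nonneg simp: g_def)
  with assms(2,4) \<open>finite F\<close> show ?thesis
    by (intro that[of F]) (auto simp: F_def powr_powr)
qed

lemma powr_one_div_le_cancel:
  fixes x y :: real
  assumes "x powr (1 / p) \<le> y powr (1 / p)" "0 < p" "0 \<le> x" "0 \<le> y"
  shows "x \<le> y"
proof -
  have "x = (x powr (1 / p)) powr p"
    using assms(2,3) by (simp add: powr_powr)
  also have "\<dots> \<le> (y powr (1 / p)) powr p"
    by (rule powr_mono2) (use assms in auto)
  also have "\<dots> = y"
    using assms(2,4) by (simp add: powr_powr)
  finally show ?thesis .
qed

locale const_diag_projection =
  fixes p :: real and P :: "('a \<Rightarrow> real) \<Rightarrow> ('a \<Rightarrow> real)" and \<alpha> :: real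
  assumes p_ge_1: "1 \<le> p"
    and projection: "contractive_positive_projection p P"
    and diagonal: "constant_diagonal P \<alpha>"
    and alpha_pos: "0 < \<alpha>"
begin

lemma p_pos: "0 < p"
  using p_ge_1 by simp

lemma P_lp: "f \<in> lp p \<Longrightarrow> P f \<in> lp p"
  and P_add: "f \<in> lp p \<Longrightarrow> g \<in> lp p \<Longrightarrow> P (\<lambda>a. f a + g a) = (\<lambda>a. P f a + P g a)"
  and P_cmult: "f \<in> lp p \<Longrightarrow> P (\<lambda>a. c * f a) = (\<lambda>a. c * P f a)"
  and P_idem: "f \<in> lp p \<Longrightarrow> P (P f) = P f"
  and P_nonneg: "f \<in> lp p \<Longrightarrow> (\<And>a. 0 \<le> f a) \<Longrightarrow> 0 \<le> P f b"
  and P_contractive: "f \<in> lp p \<Longrightarrow> lp_norm p (P f) \<le> lp_norm p f"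
  using projection unfolding contractive_positive_projection_def lp_linear_op_def by blast+

definition column :: "'a \<Rightarrow> 'a \<Rightarrow> real" where
  "column a = P (unit_vec a)"

lemma column_lp: "column a \<in> lp p"
  unfolding column_def by (intro P_lp unit_vec_in_lp)

lemma column_nonneg: "0 \<le> column a b"
  unfolding column_def by (rule P_nonneg[OF unit_vec_in_lp]) (simp add: unit_vec_def)

lemma column_diag: "column a a = \<alpha>"
  using diagonal unfolding column_def constant_diagonal_def by blast

lemma P_column: "P (column a) = column a"
  unfolding column_def by (intro P_idem unit_vec_in_lp)

lemma P_sum_unit_vec:
  assumes "finite F"
  shows "P (\<lambda>a. \<Sum>b\<in>F. c b * unit_vec b a) = (\<lambda>a. \<Sum>b\<in>F. c b * column b a)"
  using assms
proof (induction F rule: finite_induct)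
  case empty
  show ?case
    using P_cmult[OF unit_vec_in_lp, of 0] by simp
next
  case (insert x F)
  have "(\<lambda>a. \<Sum>b\<in>F. c b * unit_vec b a) \<in> lp p"
    using insert.hyps(1) p_pos by (intro lp_sum lp_cmult unit_vec_in_lp) auto
  with insert show ?case
    by (simp add: P_add lp_cmult unit_vec_in_lp P_cmult column_def)
qed

lemma P_finite_support:
  assumes "finite F" "\<And>a. a \<notin> F \<Longrightarrow> f a = 0"
  shows "P f c = (\<Sum>b\<in>F. f b * column b c)"
proof -
  have "(\<lambda>a. \<Sum>b\<in>F. f b * unit_vec b a) = f"
    unfolding sum_unit_vec[OF assms(1)] using assms(2) by auto
  with P_sum_unit_vec[OF assms(1), of f] show ?thesis
    by simp
qed

lemma P_split:
  assumes "f \<in> lp p" "finite F"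
  shows "P f c = P (\<lambda>a. if a \<in> F then 0 else f a) c + (\<Sum>b\<in>F. f b * column b c)"
proof -
  define r where "r a = (if a \<in> F then f a else 0)" for a
  define t where "t a = (if a \<in> F then 0 else f a)" for a
  have "r \<in> lp p"
    unfolding r_def by (rule lp_finite_support) (rule finite_subset[OF _ assms(2)], auto)
  moreover have "t \<in> lp p"
    unfolding t_def by (rule lp_abs_le[OF assms(1)]) (use p_pos in auto)
  moreover have "f = (\<lambda>a. t a + r a)"
    unfolding t_def r_def by auto
  ultimately have "P f c = P t c + P r c"
    by (simp add: P_add)
  moreover have "P r c = (\<Sum>b\<in>F. f b * column b c)"
    using P_finite_support[OF assms(2)] by (simp add: r_def)
  ultimately show ?thesis
    by (simp add: t_def[abs_def])
qed

lemma fixed_nonneg_sum_le: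
  assumes "y \<in> lp p" "\<And>a. 0 \<le> y a" "P y = y" "finite F"
  shows "(\<Sum>b\<in>F. y b * column b c) \<le> y c"
proof -
  have "(\<lambda>a. if a \<in> F then 0 else y a) \<in> lp p"
    by (rule lp_abs_le[OF assms(1)]) (use p_pos in auto)
  then have "0 \<le> P (\<lambda>a. if a \<in> F then 0 else y a) c"
    by (rule P_nonneg) (simp add: assms(2))
  with P_split[OF assms(1,4), of c] assms(3) show ?thesis
    by simp
qed

lemma column_mult_le: "column a c * column c b \<le> column a b"
  using fixed_nonneg_sum_le[of "column a" "{c}" b] column_lp column_nonneg P_column by simp

lemma fixed_pos_part:
  assumes "x \<in> lp p" "P x = x"
  shows "P (\<lambda>a. max (x a) 0) = (\<lambda>a. max (x a) 0)"
proof (rule ccontr)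
  define pos where "pos a = max (x a) 0" for a
  define neg where "neg a = max (- x a) 0" for a
  assume "P (\<lambda>a. max (x a) 0) \<noteq> (\<lambda>a. max (x a) 0)"
  then have "pos \<noteq> P pos"
    by (simp add: pos_def[abs_def])
  have "pos \<in> lp p" "neg \<in> lp p"
    unfolding pos_def neg_def by (auto intro: lp_abs_le[OF assms(1)] simp: p_pos less_imp_le)
  have "pos = (\<lambda>a. x a + neg a)"
    by (auto simp: pos_def neg_def max_def)
  then have "P pos = (\<lambda>a. x a + P neg a)"
    using P_add[OF assms(1) \<open>neg \<in> lp p\<close>] assms(2) by simp
  moreover have "0 \<le> P neg a" "0 \<le> P pos a" for a
    using \<open>neg \<in> lp p\<close> \<open>pos \<in> lp p\<close> by (auto intro!: P_nonneg simp: neg_def pos_def)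
  ultimately have "pos a \<le> P pos a" for a
    by (fastforce simp: pos_def)
  then have "lp_norm p pos < lp_norm p (P pos)"
    using \<open>pos \<noteq> P pos\<close> \<open>pos \<in> lp p\<close> P_lp p_pos by (intro lp_norm_strict_mono) (auto simp: pos_def)
  with P_contractive[OF \<open>pos \<in> lp p\<close>] show False
    by simp
qed

lemma fixed_pos_part_le:
  assumes "x \<in> lp p" "P x = x"
  shows "max (x b) 0 * column b c \<le> max (x c) 0"
  using fixed_nonneg_sum_le[OF _ _ fixed_pos_part[OF assms], of "{b}" c]
    lp_abs_le[OF assms(1), of "\<lambda>a. max (x a) 0"] p_pos
  by simp

lemma column_diff_pos_part_le:
  "max (column a b - l * column c b) 0 * column b d \<le> max (column a d - l * column c d) 0"
proof -
  define x where "x d = column a d + (- l) * column c d" for d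
  have "x \<in> lp p"
    unfolding x_def using p_pos by (intro lp_add lp_cmult column_lp) auto
  moreover have "P x = x"
    unfolding x_def[abs_def]
    by (simp only: P_add[OF column_lp lp_cmult[OF column_lp]] P_cmult[OF column_lp] P_column)
  ultimately show ?thesis
    using fixed_pos_part_le[of x b d] by (simp add: x_def)
qed

definition linked :: "'a \<Rightarrow> 'a \<Rightarrow> bool" where
  "linked a c \<longleftrightarrow> 0 < column a c"

lemma linked_refl: "linked a a"
  unfolding linked_def using column_diag alpha_pos by simp

lemma linked_trans: "linked a c \<Longrightarrow> linked c b \<Longrightarrow> linked a b"
  unfolding linked_def using column_mult_le[of a c b] by (meson mult_pos_pos order_less_le_trans)

lemma column_eq_0_if_not_linked: "\<not> linked a c \<Longrightarrow> column a c = 0"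
  unfolding linked_def using column_nonneg[of a c] by simp

lemma linked_sym:
  assumes "linked a c"
  shows "linked c a"
proof (rule ccontr)
  (* The fixed point column a - (column a c / alpha) * column c vanishes at c but not at a. *)
  assume "\<not> linked c a"
  then have "column c a = 0"
    by (rule column_eq_0_if_not_linked)
  moreover have "max (column a a - (column a c / \<alpha>) * column c a) 0 * column a c
      \<le> max (column a c - (column a c / \<alpha>) * column c c) 0"
    by (rule column_diff_pos_part_le)
  ultimately show False
    using assms alpha_pos by (simp add: column_diag linked_def mult_le_0_iff)
qed

lemma column_cross_le:
  assumes "linked a c" "linked a d"
  shows "column a b * column c d \<le> column a d * column c b"
proof (rule ccontr)
  assume gt: "\<not> ?thesis"
  have "linked c d"
    using linked_trans[OF linked_sym[OF assms(1)] assms(2)] .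
  then have "0 < column c d"
    unfolding linked_def .
  define l where "l = column a d / column c d"
  have pos: "0 < column a b - l * column c b"
    using gt \<open>0 < column c d\<close> by (simp add: l_def field_simps)
  have "column a d - l * column c d = 0"
    using \<open>0 < column c d\<close> by (simp add: l_def)
  with pos column_diff_pos_part_le[of a b l c d] have "column b d \<le> 0"
    by (simp add: mult_le_0_iff)
  moreover have "0 \<le> l * column c b"
    using column_nonneg[of a d] column_nonneg[of c b] \<open>0 < column c d\<close> by (simp add: l_def)
  with pos have "linked a b"
    unfolding linked_def by linarith
  then have "linked b d"
    using linked_trans[OF linked_sym assms(2)] by blast
  ultimately show False
    unfolding linked_def by simp
qed

lemma column_factor:
  assumes "linked a c"
  shows "column a b * \<alpha> = column a c * column c b"
proof (cases "linked a b")
  case True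
  have "column a b * \<alpha> \<le> column a c * column c b"
    using column_cross_le[of a c c b] assms by (simp add: column_diag)
  moreover have "column a c * column c b \<le> column a b * \<alpha>"
    using column_cross_le[of a c b c] assms True by (simp add: column_diag)
  ultimately show ?thesis
    by linarith
next
  case False
  then have "\<not> linked c b"
    using linked_trans[OF assms] by blast
  with False show ?thesis
    by (simp add: column_eq_0_if_not_linked)
qed

lemma column_sq: "linked a b \<Longrightarrow> column a b * column b a = \<alpha> * \<alpha>"
  using column_factor[of a b a] by (simp add: column_diag)

definition block :: "'a \<Rightarrow> 'a set" where
  "block a = {c. linked a c}"

lemma self_in_block: "a \<in> block a"
  unfolding block_def using linked_refl by simp

lemma block_eq: "linked a c \<Longrightarrow> block c = block a"
  unfolding block_def using linked_trans linked_sym by blast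

lemma column_outside_block: "d \<notin> block a \<Longrightarrow> column a d = 0"
  unfolding block_def by (simp add: column_eq_0_if_not_linked)

lemma sum_column_sq:
  assumes "G \<subseteq> block a"
  shows "(\<Sum>b\<in>G. column a b * column b a) = real (card G) * \<alpha> * \<alpha>"
  using assms column_sq by (simp add: block_def subset_iff)

lemma finite_block: "finite (block a)"
proof -
  have "card G \<le> nat \<lfloor>1 / \<alpha>\<rfloor>" if "G \<subseteq> block a" "finite G" for G
  proof -
    have "real (card G) * \<alpha> * \<alpha> \<le> 1 * \<alpha>"
      using fixed_nonneg_sum_le[OF column_lp column_nonneg P_column \<open>finite G\<close>, of a a]
      by (simp add: sum_column_sq[OF \<open>G \<subseteq> block a\<close>] column_diag)
    then have "real (card G) \<le> 1 / \<alpha>"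
      using alpha_pos by (simp add: le_divide_eq)
    then show ?thesis
      by (simp add: le_nat_floor)
  qed
  then show ?thesis
    using finite_if_finite_subsets_card_bdd by blast
qed

lemma card_block: "real (card (block a)) * \<alpha> = 1"
proof -
  have "\<alpha> = P (column a) a"
    by (simp add: P_column column_diag)
  also have "\<dots> = real (card (block a)) * \<alpha> * \<alpha>"
    using P_finite_support[of "block a" "column a" a] finite_block column_outside_block
    by (simp add: sum_column_sq)
  finally show ?thesis
    using alpha_pos by simp
qed

lemma alpha_le_1: "\<alpha> \<le> 1"
proof -
  have "0 < card (block a)"
    using finite_block self_in_block by (auto simp: card_gt_0_iff)
  then have "1 * \<alpha> \<le> real (card (block a)) * \<alpha>"
    using alpha_pos by (intro mult_right_mono) auto
  with card_block show ?thesis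
    by simp
qed

lemma lp_norm_perturbed_column:
  assumes "t < \<alpha>"
  shows "lp_norm p (\<lambda>d. column a d + (- t) * unit_vec a d)
    = ((\<Sum>d\<in>block a. column a d powr p) - \<alpha> powr p + (\<alpha> - t) powr p) powr (1 / p)"
proof -
  define f where "f d = column a d + (- t) * unit_vec a d" for d
  have abs_f: "\<bar>f d\<bar> powr p = (if d = a then (\<alpha> - t) powr p else column a d powr p)" for d
    using assms column_nonneg by (simp add: f_def unit_vec_def column_diag)
  have "f d = 0" if "d \<notin> block a" for d
    using that self_in_block[of a] column_outside_block[OF that]
    by (auto simp: f_def unit_vec_def indicator_def)
  then have "lp_norm p f = (\<Sum>d\<in>block a. \<bar>f d\<bar> powr p) powr (1 / p)"
    by (rule lp_norm_finite_support[OF finite_block])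
  also have "(\<Sum>d\<in>block a. \<bar>f d\<bar> powr p)
      = (\<Sum>d\<in>block a. column a d powr p) - \<alpha> powr p + (\<alpha> - t) powr p"
    using sum.remove[OF finite_block self_in_block, of "\<lambda>d. \<bar>f d\<bar> powr p"]
      sum.remove[OF finite_block self_in_block, of "\<lambda>d. column a d powr p"]
    by (simp add: abs_f column_diag)
  finally show ?thesis
    unfolding f_def .
qed

lemma column_perturbation:
  assumes "\<bar>t\<bar> < \<alpha>"
  shows "(1 - t) powr p * (\<Sum>d\<in>block a. column a d powr p)
    \<le> (\<Sum>d\<in>block a. column a d powr p) - \<alpha> powr p + (\<alpha> - t) powr p"
proof -
  define N where "N = (\<Sum>d\<in>block a. column a d powr p)"
  have "0 < 1 - t"
    using assms alpha_le_1 by auto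
  define f where "f d = column a d + (- t) * unit_vec a d" for d
  have "f \<in> lp p"
    unfolding f_def using p_pos by (intro lp_add lp_cmult column_lp unit_vec_in_lp) auto
  have "P f = (\<lambda>d. column a d + (- t) * column a d)"
    unfolding f_def[abs_def]
    by (simp only: P_add[OF column_lp lp_cmult[OF unit_vec_in_lp]] P_cmult[OF unit_vec_in_lp]
        P_column column_def[symmetric])
  then have "lp_norm p (P f) = (\<Sum>d\<in>block a. \<bar>(1 - t) * column a d\<bar> powr p) powr (1 / p)"
    by (simp add: lp_norm_finite_support[OF finite_block] column_outside_block algebra_simps)
  also have "(\<Sum>d\<in>block a. \<bar>(1 - t) * column a d\<bar> powr p) = (1 - t) powr p * N"
    using \<open>0 < 1 - t\<close> column_nonneg
    by (simp add: N_def abs_mult powr_mult sum_distrib_left)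
  finally have "lp_norm p (P f) = ((1 - t) powr p * N) powr (1 / p)" .
  moreover have "lp_norm p f = (N - \<alpha> powr p + (\<alpha> - t) powr p) powr (1 / p)"
    unfolding f_def[abs_def] N_def using lp_norm_perturbed_column[of t a] assms by simp
  ultimately have norms: "((1 - t) powr p * N) powr (1 / p) \<le> (N - \<alpha> powr p + (\<alpha> - t) powr p) powr (1 / p)"
    using P_contractive[OF \<open>f \<in> lp p\<close>] by simp
  have "0 \<le> (1 - t) powr p * N"
    by (simp add: N_def sum_nonneg)
  moreover have "0 \<le> N - \<alpha> powr p + (\<alpha> - t) powr p"
    using sum.remove[OF finite_block self_in_block, of "\<lambda>d. column a d powr p"]
    by (simp add: N_def column_diag sum_nonneg)
  ultimately show ?thesis
    unfolding N_def[symmetric] by (rule powr_one_div_le_cancel[OF norms p_pos])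
qed

lemma column_powr_sum: "(\<Sum>d\<in>block a. column a d powr p) = \<alpha> powr (p - 1)"
proof -
  define N where "N = (\<Sum>d\<in>block a. column a d powr p)"
  define h where "h t = N - \<alpha> powr p + (\<alpha> - t) powr p - (1 - t) powr p * N" for t
  have deriv: "(h has_real_derivative (p * N - p * \<alpha> powr (p - 1))) (at 0)"
    unfolding h_def[abs_def] using alpha_pos by (auto intro!: derivative_eq_intros)
  have "\<forall>t. \<bar>0 - t\<bar> < \<alpha> \<longrightarrow> h 0 \<le> h t"
    using column_perturbation by (simp add: h_def N_def)
  then have "p * N - p * \<alpha> powr (p - 1) = 0"
    by (rule DERIV_local_min[OF deriv alpha_pos])
  with p_pos show ?thesis
    by (simp add: N_def)
qed

lemma column_eq_alpha:
  assumes "linked a c"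
  shows "column a c = \<alpha>"
proof -
  have "0 < column a c"
    using assms unfolding linked_def .
  define k where "k = \<alpha> / column a c"
  have "0 < k"
    using \<open>0 < column a c\<close> alpha_pos by (simp add: k_def)
  have "column c b = k * column a b" for b
    using column_factor[OF assms, of b] \<open>0 < column a c\<close> by (simp add: k_def field_simps)
  then have "\<alpha> powr (p - 1) = (\<Sum>d\<in>block a. k powr p * column a d powr p)"
    using column_powr_sum[of c] block_eq[OF assms] \<open>0 < k\<close> column_nonneg
    by (simp add: powr_mult)
  also have "\<dots> = k powr p * \<alpha> powr (p - 1)"
    by (simp add: sum_distrib_left[symmetric] column_powr_sum)
  finally have "k powr p = 1"
    using alpha_pos by simp
  with \<open>0 < k\<close> p_pos have "k = 1"
    by (metis powr_eq_one_iff_gen less_irrefl)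
  with \<open>0 < column a c\<close> show ?thesis
    by (simp add: k_def)
qed

lemma column_eq: "column a b = (if linked a b then \<alpha> else 0)"
  by (simp add: column_eq_alpha column_eq_0_if_not_linked)

lemma P_eq_sum_if_column_vanishes:
  assumes "f \<in> lp p" "finite B" "\<And>a. a \<notin> B \<Longrightarrow> column a b = 0"
  shows "P f b = (\<Sum>a\<in>B. f a * column a b)"
proof -
  have "\<bar>P f b - (\<Sum>a\<in>B. f a * column a b)\<bar> \<le> 0 + \<epsilon>" if eps: "0 < \<epsilon>" for \<epsilon>
  proof -
    obtain F where "finite F" "B \<subseteq> F"
      and tail: "lp_norm p (\<lambda>a. if a \<in> F then 0 else f a) \<le> \<epsilon>"
      using lp_tail_small[OF assms(1) p_pos assms(2) eps] .
    have tail_lp: "(\<lambda>a. if a \<in> F then 0 else f a) \<in> lp p"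
      by (rule lp_abs_le[OF assms(1)]) (use p_pos in auto)
    have "(\<Sum>a\<in>F. f a * column a b) = (\<Sum>a\<in>B. f a * column a b)"
      by (rule sum.mono_neutral_right[OF \<open>finite F\<close> \<open>B \<subseteq> F\<close>]) (simp add: assms(3))
    then have "\<bar>P f b - (\<Sum>a\<in>B. f a * column a b)\<bar> = \<bar>P (\<lambda>a. if a \<in> F then 0 else f a) b\<bar>"
      using P_split[OF assms(1) \<open>finite F\<close>, of b] by simp
    also have "\<dots> \<le> lp_norm p (P (\<lambda>a. if a \<in> F then 0 else f a))"
      by (rule abs_le_lp_norm[OF P_lp[OF tail_lp] p_pos])
    also have "\<dots> \<le> lp_norm p (\<lambda>a. if a \<in> F then 0 else f a)"
      by (rule P_contractive[OF tail_lp])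
    finally show ?thesis
      using tail by linarith
  qed
  then have "\<bar>P f b - (\<Sum>a\<in>B. f a * column a b)\<bar> \<le> 0"
    by (rule field_le_epsilon)
  then show ?thesis
    by simp
qed

lemma P_on_block:
  assumes "f \<in> lp p" "b \<in> block c"
  shows "P f b = \<alpha> * (\<Sum>a\<in>block c. f a)"
proof -
  have "linked a b \<longleftrightarrow> a \<in> block c" for a
    using assms(2) linked_trans linked_sym unfolding block_def by blast
  then have "P f b = (\<Sum>a\<in>block c. f a * \<alpha>)"
    using P_eq_sum_if_column_vanishes[OF assms(1), of "block c" b] finite_block by (simp add: column_eq)
  then show ?thesis
    by (simp add: sum_distrib_left mult.commute)
qed

lemma disjoint_blocks: "disjoint (range block)"
proof (rule disjointI)
  fix X Y
  assume "X \<in> range block" "Y \<in> range block" "X \<noteq> Y"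
  then obtain x y where "X = block x" "Y = block y" "block x \<noteq> block y"
    by blast
  moreover have "block x = block y" if "c \<in> block x" "c \<in> block y" for c
    using that block_eq[of x c] block_eq[of y c] by (simp add: block_def)
  ultimately show "X \<inter> Y = {}"
    by blast
qed

end

theorem proposition3p2:
  fixes P :: "('a \<Rightarrow> real) \<Rightarrow> ('a \<Rightarrow> real)" and p \<alpha> :: real
  assumes "1 \<le> p"
    and "contractive_positive_projection p P"
    and "constant_diagonal P \<alpha>"
    and "\<alpha> > 0"
  shows "\<exists>n::nat. n \<ge> 1 \<and> 1 / \<alpha> = real n \<and>
           (\<exists>\<A> :: 'a set set.
              \<Union>\<A> = UNIV \<and> disjoint \<A> \<and>
              (\<forall>B\<in>\<A>. finite B \<and> card B = n) \<and>
              (\<forall>f\<in>lp p. \<forall>B\<in>\<A>. \<forall>b\<in>B. P f b = \<alpha> * (\<Sum>a\<in>B. f a)))"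
proof -
  interpret const_diag_projection p P \<alpha>
    using assms by unfold_locales
  define n where "n = card (block undefined)"
  have card_block_eq: "real (card (block a)) = 1 / \<alpha>" for a
    using card_block[of a] alpha_pos by (simp add: eq_divide_eq)
  then have n: "1 / \<alpha> = real n"
    by (simp add: n_def)
  have "card (block a) = n" for a
    using card_block_eq[of a] n by simp
  then have blocks: "\<forall>B\<in>range block. finite B \<and> card B = n"
    using finite_block by blast
  have "1 \<le> n"
    using finite_block[of undefined] self_in_block[of undefined]
    by (auto simp: n_def Suc_le_eq card_gt_0_iff)
  moreover have "\<Union>(range block) = UNIV"
    using self_in_block by blast
  moreover have "\<forall>f\<in>lp p. \<forall>B\<in>range block. \<forall>b\<in>B. P f b = \<alpha> * (\<Sum>a\<in>B. f a)"
    using P_on_block by blast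
  ultimately show ?thesis
    by (intro exI[of _ n] exI[of _ "range block"] conjI n blocks disjoint_blocks)
qed

end
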